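(* Let $J$ be a finite set and $F:\{0,1\}^J\to\mathbb{Q}_{\ge0}$. Then $F$ is windable if and only if $F_\oplus$ is even-windable.
   Context: For $x,y\in\{0,1\}^I$, $x\oplus y$ is coordinatewise addition mod 2, and $\mathbf S$ is the characteristic vector of $S\subseteq I$. $1+J$ denotes the disjoint union of $\{1\}$ and $J$, with elements of $\{0,1\}^{1+J}$ written $(p;x)$, $p\in\{0,1\}$, $x\in\{0,1\}^J$. Define $F_\oplus:\{0,1\}^{1+J}\to\mathbb{Q}_{\ge0}$ by $F_\oplus(p;x)=F(x)$ if $p+\sum_{i\in J}x_i$ is even and $0$ otherwise. For $z\in\{0,1\}^I$, $\mathrm{Match}(z)$ is the set of partitions of $\{i:z_i=1\}$ into pairs, and $\mathrm{Match}'(z)$ the set of partitions of $\{i:z_i=1\}$ into blocks of size 1 or 2. $G:\{0,1\}^I\to\mathbb{Q}_{\ge0}$ is even-windable if there exist $B(x,y,M)\ge0$ for all $x,y\in\{0,1\}^I$, $M\in\mathrm{Match}(x\oplus y)$, with $G(x)G(y)=\sum_{M\in\mathrm{Match}(x\oplus y)}B(x,y,M)$ for all $x,y$, and $B(x,y,M)=B(x\oplus\mathbf S,y\oplus\mathbf S,M)$ for all $x,y$ and all $S\in M\in\mathrm{Match}(x\oplus y)$. $G$ is windable if the same holds with $\mathrm{Match}$ replaced everywhere by $\mathrm{Match}'$. *)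

theory Defs
  imports Complex_Main "HOL-Library.Disjoint_Sets"
begin

text \<open>Elements of {0,1}^I are modelled as functions I \<Rightarrow> bool on a finite type I.\<close>

definition bxor :: "('i \<Rightarrow> bool) \<Rightarrow> ('i \<Rightarrow> bool) \<Rightarrow> ('i \<Rightarrow> bool)" where
  "bxor x y = (\<lambda>i. x i \<noteq> y i)"

definition charvec :: "'i set \<Rightarrow> ('i \<Rightarrow> bool)" where
  "charvec S = (\<lambda>i. i \<in> S)"

definition Match :: "('i \<Rightarrow> bool) \<Rightarrow> 'i set set set" where
  "Match z = {M. partition_on {i. z i} M \<and> (\<forall>S\<in>M. card S = 2)}"

definition Match' :: "('i \<Rightarrow> bool) \<Rightarrow> 'i set set set" where
  "Match' z = {M. partition_on {i. z i} M \<and> (\<forall>S\<in>M. card S = 1 \<or> card S = 2)}"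

definition winding_wrt ::
  "(('i \<Rightarrow> bool) \<Rightarrow> 'i set set set) \<Rightarrow> (('i::finite \<Rightarrow> bool) \<Rightarrow> rat) \<Rightarrow> bool" where
  "winding_wrt Mt G \<longleftrightarrow>
     (\<exists>B :: ('i \<Rightarrow> bool) \<Rightarrow> ('i \<Rightarrow> bool) \<Rightarrow> 'i set set \<Rightarrow> rat.
        (\<forall>x y. \<forall>M\<in>Mt (bxor x y). B x y M \<ge> 0) \<and>
        (\<forall>x y. G x * G y = (\<Sum>M\<in>Mt (bxor x y). B x y M)) \<and>
        (\<forall>x y. \<forall>M\<in>Mt (bxor x y). \<forall>S\<in>M.
            B x y M = B (bxor x (charvec S)) (bxor y (charvec S)) M))"

definition even_windable :: "(('i::finite \<Rightarrow> bool) \<Rightarrow> rat) \<Rightarrow> bool" where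
  "even_windable G \<longleftrightarrow> winding_wrt Match G"

definition windable :: "(('i::finite \<Rightarrow> bool) \<Rightarrow> rat) \<Rightarrow> bool" where
  "windable G \<longleftrightarrow> winding_wrt Match' G"

text \<open>F_oplus on {0,1}^(1+J); 1+J is modelled as 'j option, None being the extra coordinate.\<close>
definition F_oplus :: "(('j::finite \<Rightarrow> bool) \<Rightarrow> rat) \<Rightarrow> ('j option \<Rightarrow> bool) \<Rightarrow> rat" where
  "F_oplus F z = (if even (of_bool (z None) + (\<Sum>j\<in>UNIV. of_bool (z (Some j)) :: nat))
                  then F (\<lambda>j. z (Some j)) else 0)"

end

theory Submission
  imports Defs
begin

(*
  A winding B of F is pushed forward to a winding of F_oplus, and a winding of F_oplus is pulled
  back to one of F, along the correspondence between the two kinds of matchings.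

  Forward: for points (p;x), (q;y) of even weight, a partition of the support of x \<oplus> y into pairs
  and singletons is completed to a perfect matching of the support of (p;x) \<oplus> (q;y) by keeping the
  pairs and pairing up the singletons together with the extra coordinate, if present; there is an
  even number of these because both points have even weight. Each block of the completion restricts
  on J to a union of blocks of the original partition, so flipping a block of the completion is a
  succession of flips of the original blocks, and flip invariance is inherited.

  Backward: a perfect matching of the support of (p;x) \<oplus> (q;y) restricts on J to a partition into
  pairs and singletons, and conversely each such partition lifts uniquely by attaching the extra
  coordinate to a singleton block. Summing the weights over the extra bits p, q gives F(x) F(y),
  because F_oplus(0;x) + F_oplus(1;x) = F(x); flipping a singleton block of x corresponds to flipping
  its lift together with the extra bit, which merely permutes the summands.
*)

definition weight :: "('a::finite \<Rightarrow> bool) \<Rightarrow> nat" where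
  "weight z = card {u. z u}"

lemma card_option_set:
  fixes S :: "'a option set"
  assumes "finite S"
  shows "card S = of_bool (None \<in> S) + card (Some -` S)"
proof -
  have "S - {None} \<subseteq> range Some"
  proof
    fix u assume "u \<in> S - {None}"
    then show "u \<in> range Some" by (cases u) auto
  qed
  then have "card (Some -` (S - {None})) = card (S - {None})"
    by (intro card_vimage_inj) auto
  moreover have "Some -` (S - {None}) = Some -` S"
    by blast
  moreover have "card S = of_bool (None \<in> S) + card (S - {None})"
  proof (cases "None \<in> S")
    case True
    then have "card S > 0" using assms card_gt_0_iff by blast
    with True show ?thesis by simp
  qed simp
  ultimately show ?thesis
    by simp
qed

lemma weight_option: "weight z = of_bool (z None) + weight (\<lambda>j. z (Some j))"
  unfolding weight_def by (subst card_option_set) (simp_all add: vimage_def)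

lemma F_oplus_eq: "F_oplus F z = (if even (weight z) then F (\<lambda>j. z (Some j)) else 0)"
  unfolding F_oplus_def by (simp add: weight_option weight_def)

lemma weight_bxor: "weight (bxor z w) + 2 * card {u. z u \<and> w u} = weight z + weight w"
proof -
  have "(\<Sum>u\<in>UNIV. of_bool (bxor z w u) + 2 * of_bool (z u \<and> w u) :: nat)
      = (\<Sum>u\<in>UNIV. of_bool (z u) + of_bool (w u))"
    by (rule sum.cong) (auto simp: bxor_def)
  then show ?thesis
    unfolding weight_def by (simp add: sum.distrib sum_distrib_left[symmetric] del: sum_of_bool_eq) simp
qed

lemma even_weight_bxor: "even (weight (bxor z w)) \<longleftrightarrow> (even (weight z) \<longleftrightarrow> even (weight w))"
  using weight_bxor[of z w] by (metis even_add dvd_triv_left)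

lemma weight_charvec: "weight (charvec S) = card S"
  by (simp add: weight_def charvec_def)

lemma bxor_bxor_cancel: "bxor (bxor x c) (bxor y c) = bxor x y"
  by (auto simp: bxor_def fun_eq_iff)

lemma bxor_charvec_empty: "bxor x (charvec {}) = x"
  by (simp add: bxor_def charvec_def)

lemma bxor_charvec_Un: "A \<inter> C = {} \<Longrightarrow> bxor x (charvec (A \<union> C)) = bxor (bxor x (charvec C)) (charvec A)"
  by (auto simp: bxor_def charvec_def fun_eq_iff)

lemma bxor_Some: "(\<lambda>j. bxor z w (Some j)) = bxor (\<lambda>j. z (Some j)) (\<lambda>j. w (Some j))"
  by (simp add: bxor_def)

lemma bxor_charvec_Some: "(\<lambda>j. bxor z (charvec S) (Some j)) = bxor (\<lambda>j. z (Some j)) (charvec (Some -` S))"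
  by (simp add: bxor_def charvec_def)

lemma partition_on_Un:
  assumes P: "partition_on A P" and Q: "partition_on B Q" and AB: "A \<inter> B = {}"
  shows "partition_on (A \<union> B) (P \<union> Q)"
proof -
  have "disjnt p q" if "p \<in> P" "q \<in> Q" for p q
  proof -
    have "p \<subseteq> A" "q \<subseteq> B"
      using that partition_onD1[OF P] partition_onD1[OF Q] by auto
    then show ?thesis
      using AB by (auto simp: disjnt_def)
  qed
  then have "disjoint (P \<union> Q)"
    using partition_onD2[OF P] partition_onD2[OF Q] unfolding pairwise_def by (auto simp: disjnt_sym)
  then show ?thesis
    using P Q by (auto simp: partition_on_def)
qed

lemma perfect_matching_exists:
  assumes "finite U" "even (card U)"
  shows "\<exists>M. partition_on U M \<and> (\<forall>S\<in>M. card S = 2)"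
proof -
  obtain n where "card U = 2 * n" using assms(2) by blast
  then show ?thesis
  using assms(1) proof (induction n arbitrary: U)
    case 0
    then show ?case by (auto simp: partition_on_empty)
  next
    case (Suc n)
    then obtain a b V where U: "U = insert a (insert b V)" "a \<notin> insert b V" "b \<notin> V" "card V = 2 * n"
      by (auto simp: card_Suc_eq)
    then obtain M where M: "partition_on V M" "\<forall>S\<in>M. card S = 2"
      using Suc by auto
    have "partition_on U (insert {a, b} M)"
      using M U partition_onD1[OF M(1)] by (subst partition_on_insert) (auto simp: disjnt_def)
    then show ?case using M U by auto
  qed
qed

definition perfect_matching :: "'a set \<Rightarrow> 'a set set" where
  "perfect_matching U = (SOME M. partition_on U M \<and> (\<forall>S\<in>M. card S = 2))"

lemma perfect_matching:
  assumes "finite U" "even (card U)"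
  shows "partition_on U (perfect_matching U)" "\<forall>S\<in>perfect_matching U. card S = 2"
  using someI_ex[OF perfect_matching_exists[OF assms]] unfolding perfect_matching_def by auto

definition flip_invariant ::
  "(('i \<Rightarrow> bool) \<Rightarrow> 'i set set set) \<Rightarrow> (('i \<Rightarrow> bool) \<Rightarrow> ('i \<Rightarrow> bool) \<Rightarrow> 'i set set \<Rightarrow> rat) \<Rightarrow> bool"
  where "flip_invariant Mt B \<longleftrightarrow>
    (\<forall>x y. \<forall>M\<in>Mt (bxor x y). \<forall>S\<in>M. B x y M = B (bxor x (charvec S)) (bxor y (charvec S)) M)"

definition is_winding :: "(('i::finite \<Rightarrow> bool) \<Rightarrow> 'i set set set) \<Rightarrow> (('i \<Rightarrow> bool) \<Rightarrow> rat) \<Rightarrow>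
    (('i \<Rightarrow> bool) \<Rightarrow> ('i \<Rightarrow> bool) \<Rightarrow> 'i set set \<Rightarrow> rat) \<Rightarrow> bool"
  where "is_winding Mt G B \<longleftrightarrow>
    (\<forall>x y. \<forall>M\<in>Mt (bxor x y). B x y M \<ge> 0) \<and>
    (\<forall>x y. G x * G y = (\<Sum>M\<in>Mt (bxor x y). B x y M)) \<and>
    flip_invariant Mt B"

lemma winding_wrt_iff_is_winding: "winding_wrt Mt G \<longleftrightarrow> (\<exists>B. is_winding Mt G B)"
  unfolding winding_wrt_def is_winding_def flip_invariant_def ..

lemma flip_invariant_Union:
  assumes inv: "flip_invariant Mt B" and M: "M \<in> Mt (bxor x y)" and disj: "disjoint M"
    and "finite T" "T \<subseteq> M"
  shows "B x y M = B (bxor x (charvec (\<Union>T))) (bxor y (charvec (\<Union>T))) M"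
  using \<open>finite T\<close> \<open>T \<subseteq> M\<close>
proof (induction T rule: finite_induct)
  case empty
  show ?case by (simp add: bxor_charvec_empty)
next
  case (insert A T)
  let ?x = "bxor x (charvec (\<Union>T))" and ?y = "bxor y (charvec (\<Union>T))"
  have "A \<inter> \<Union>T = {}"
    using pairwiseD[OF disj] insert.hyps(2) insert.prems by (fastforce simp: disjnt_def)
  then have flip_A: "bxor z (charvec (\<Union>(insert A T))) = bxor (bxor z (charvec (\<Union>T))) (charvec A)" for z
    by (simp add: bxor_charvec_Un)
  have "M \<in> Mt (bxor ?x ?y)" "A \<in> M"
    using M insert.prems by (simp_all add: bxor_bxor_cancel)
  have "B x y M = B ?x ?y M"
    using insert by simp
  also have "\<dots> = B (bxor ?x (charvec A)) (bxor ?y (charvec A)) M"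
    using inv \<open>M \<in> Mt (bxor ?x ?y)\<close> \<open>A \<in> M\<close> unfolding flip_invariant_def by blast
  finally show ?case
    unfolding flip_A .
qed

section \<open>Pushing a winding of F forward to F_oplus\<close>

lemma Match'_partition_on: "M \<in> Match' z \<Longrightarrow> partition_on {i. z i} M"
  by (simp add: Match'_def)

lemma Match'_card: "M \<in> Match' z \<Longrightarrow> T \<in> M \<Longrightarrow> card T = 1 \<or> card T = 2"
  by (simp add: Match'_def)

definition unpaired :: "('a option \<Rightarrow> bool) \<Rightarrow> 'a set set \<Rightarrow> 'a option set" where
  "unpaired d M = Some ` \<Union>{T\<in>M. card T = 1} \<union> {u. u = None \<and> d u}"

definition complete_matching :: "('a option \<Rightarrow> bool) \<Rightarrow> 'a set set \<Rightarrow> 'a option set set" where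
  "complete_matching d M = (`) Some ` {T\<in>M. card T = 2} \<union> perfect_matching (unpaired d M)"

context
  fixes d :: "'j::finite option \<Rightarrow> bool" and M :: "'j set set"
  assumes M: "M \<in> Match' (\<lambda>j. d (Some j))"
begin

lemma Union_pairs_Un_singletons: "\<Union>{T\<in>M. card T = 2} \<union> \<Union>{T\<in>M. card T = 1} = {j. d (Some j)}"
  using partition_onD1[OF Match'_partition_on[OF M]] Match'_card[OF M] by blast

lemma Union_pairs_Int_singletons: "\<Union>{T\<in>M. card T = 2} \<inter> \<Union>{T\<in>M. card T = 1} = {}"
  using pairwiseD[OF partition_onD2[OF Match'_partition_on[OF M]]] by (fastforce simp: disjnt_def)

lemma support_eq_pairs_Un_unpaired: "{u. d u} = Some ` \<Union>{T\<in>M. card T = 2} \<union> unpaired d M"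
proof -
  have "{u. d u} = Some ` {j. d (Some j)} \<union> {u. u = None \<and> d u}"
    by (auto simp: image_iff) (metis option.exhaust)
  then show ?thesis
    unfolding unpaired_def Union_pairs_Un_singletons[symmetric] by blast
qed

context
  assumes even_weight: "even (weight d)"
begin

lemma even_card_unpaired: "even (card (unpaired d M))"
proof -
  let ?P = "{T\<in>M. card T = 2}" and ?Q = "{T\<in>M. card T = 1}"
  have disj: "disjoint M"
    using Match'_partition_on[OF M] by (rule partition_onD2)
  have card_Union: "card (\<Union>N) = sum card N" if "N \<subseteq> M" for N
    using pairwise_subset[OF disj that] by (rule card_Union_disjoint) simp
  have "card {j. d (Some j)} = sum card M"
    using partition_onD1[OF Match'_partition_on[OF M]] card_Union[of M] by simp
  also have "\<dots> = sum card ?P + sum card ?Q"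
    using Match'_card[OF M] by (subst sum.union_disjoint[symmetric]) (auto intro: sum.cong)
  also have "\<dots> = 2 * card ?P + card ?Q"
    by simp
  finally have "weight d = of_bool (d None) + 2 * card ?P + card ?Q"
    by (simp add: weight_option weight_def)
  moreover have "card (unpaired d M) = of_bool (d None) + card ?Q"
  proof -
    have "Some -` unpaired d M = \<Union>?Q"
      unfolding unpaired_def by auto
    then show ?thesis
      using card_option_set[of "unpaired d M"] card_Union[of ?Q] by (simp add: unpaired_def)
  qed
  ultimately show ?thesis
    using even_weight by simp
qed

lemma partition_on_perfect_matching_unpaired:
  "partition_on (unpaired d M) (perfect_matching (unpaired d M))"
  by (rule perfect_matching(1)) (simp_all add: even_card_unpaired)

lemma card_perfect_matching_unpaired: "S \<in> perfect_matching (unpaired d M) \<Longrightarrow> card S = 2"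
  using perfect_matching(2)[of "unpaired d M"] by (simp add: even_card_unpaired)

lemma complete_matching_in_Match: "complete_matching d M \<in> Match d"
proof -
  let ?P = "{T\<in>M. card T = 2}"
  have "partition_on (\<Union>?P) ?P"
  proof (rule partition_onI)
    show "disjnt p q" if "p \<in> ?P" "q \<in> ?P" "p \<noteq> q" for p q
      using that pairwiseD[OF partition_onD2[OF Match'_partition_on[OF M]]] by blast
  qed auto
  then have "partition_on (Some ` \<Union>?P) ((`) Some ` ?P - {{}})"
    by (rule partition_on_inj_image) simp
  moreover have "(`) Some ` ?P - {{}} = (`) Some ` ?P"
    by auto
  moreover have "Some ` \<Union>?P \<inter> unpaired d M = {}"
    using Union_pairs_Int_singletons unfolding unpaired_def by auto
  ultimately have "partition_on (Some ` \<Union>?P \<union> unpaired d M) ((`) Some ` ?P \<union> perfect_matching (unpaired d M))"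
    using partition_on_perfect_matching_unpaired by (intro partition_on_Un) simp_all
  then have "partition_on {u. d u} (complete_matching d M)"
    unfolding support_eq_pairs_Un_unpaired complete_matching_def .
  moreover have "card S = 2" if "S \<in> complete_matching d M" for S
    using that card_perfect_matching_unpaired
    by (auto simp: complete_matching_def card_image)
  ultimately show ?thesis
    by (simp add: Match_def)
qed

lemma complete_matching_block_eq_Union:
  assumes "S \<in> complete_matching d M"
  shows "Some -` S = \<Union>{T\<in>M. T \<subseteq> Some -` S}"
proof (cases "S \<in> perfect_matching (unpaired d M)")
  case True
  then have "S \<subseteq> unpaired d M"
    using partition_onD1[OF partition_on_perfect_matching_unpaired] by blast
  have "j \<in> \<Union>{T\<in>M. T \<subseteq> Some -` S}" if j: "j \<in> Some -` S" for j
  proof -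
    obtain T where "T \<in> M" "card T = 1" "j \<in> T"
      using j \<open>S \<subseteq> unpaired d M\<close> unfolding unpaired_def by auto
    then show ?thesis
      using j by (auto simp: card_1_singleton_iff)
  qed
  then show ?thesis
    by blast
next
  case False
  then show ?thesis
    using assms unfolding complete_matching_def by auto
qed

end

end

definition push_weights :: "(('j::finite \<Rightarrow> bool) \<Rightarrow> ('j \<Rightarrow> bool) \<Rightarrow> 'j set set \<Rightarrow> rat) \<Rightarrow>
    ('j option \<Rightarrow> bool) \<Rightarrow> ('j option \<Rightarrow> bool) \<Rightarrow> 'j option set set \<Rightarrow> rat" where
  "push_weights B z w M =
     (if even (weight z) \<and> even (weight w)
      then \<Sum>M'\<in>{M'\<in>Match' (bxor (\<lambda>j. z (Some j)) (\<lambda>j. w (Some j))). complete_matching (bxor z w) M' = M}.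
             B (\<lambda>j. z (Some j)) (\<lambda>j. w (Some j)) M'
      else 0)"

lemma push_weights_nonneg:
  assumes "\<forall>x y. \<forall>M\<in>Match' (bxor x y). B x y M \<ge> 0"
  shows "push_weights B z w M \<ge> 0"
  using assms unfolding push_weights_def by (auto intro!: sum_nonneg)

lemma sum_push_weights:
  assumes "\<forall>x y. F x * F y = (\<Sum>M\<in>Match' (bxor x y). B x y M)"
  shows "F_oplus F z * F_oplus F w = (\<Sum>M\<in>Match (bxor z w). push_weights B z w M)"
proof (cases "even (weight z) \<and> even (weight w)")
  case True
  let ?x = "\<lambda>j. z (Some j)" and ?y = "\<lambda>j. w (Some j)" and ?d = "bxor z w"
  have "even (weight ?d)"
    using True even_weight_bxor by blast
  then have into_Match: "complete_matching ?d ` Match' (bxor ?x ?y) \<subseteq> Match ?d"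
    using complete_matching_in_Match[where d = "bxor z w", unfolded bxor_Some] by auto
  have "F_oplus F z * F_oplus F w = F ?x * F ?y"
    using True by (simp add: F_oplus_eq)
  also have "\<dots> = (\<Sum>M'\<in>Match' (bxor ?x ?y). B ?x ?y M')"
    using assms by blast
  also have "\<dots> = (\<Sum>M\<in>Match ?d. \<Sum>M'\<in>{M'\<in>Match' (bxor ?x ?y). complete_matching ?d M' = M}. B ?x ?y M')"
    by (rule sum.group[symmetric]) (simp_all add: into_Match)
  also have "\<dots> = (\<Sum>M\<in>Match ?d. push_weights B z w M)"
    unfolding push_weights_def using True by simp
  finally show ?thesis .
next
  case False
  then show ?thesis
    by (auto simp: push_weights_def F_oplus_eq)
qed

lemma flip_invariant_push_weights:
  assumes inv: "flip_invariant Match' B"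
  shows "flip_invariant Match (push_weights B)"
  unfolding flip_invariant_def
proof (intro allI ballI)
  fix z w :: "'a option \<Rightarrow> bool" and M S
  assume M: "M \<in> Match (bxor z w)" and S: "S \<in> M"
  let ?z' = "bxor z (charvec S)" and ?w' = "bxor w (charvec S)"
  have "card S = 2"
    using M S by (simp add: Match_def)
  then have parity: "even (weight ?z') = even (weight z)" "even (weight ?w') = even (weight w)"
    by (simp_all add: even_weight_bxor weight_charvec)
  show "push_weights B z w M = push_weights B ?z' ?w' M"
  proof (cases "even (weight z) \<and> even (weight w)")
    case False
    moreover have "\<not> (even (weight ?z') \<and> even (weight ?w'))"
      using False parity by simp
    ultimately show ?thesis
      unfolding push_weights_def by (simp only: if_False)
  next
    case True
    let ?x = "\<lambda>j. z (Some j)" and ?y = "\<lambda>j. w (Some j)" and ?d = "bxor z w" and ?S = "Some -` S"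
    let ?Ms = "{M'\<in>Match' (bxor ?x ?y). complete_matching ?d M' = M}"
    have even_d: "even (weight ?d)"
      using True even_weight_bxor by blast
    have flip_S: "B ?x ?y M' = B (bxor ?x (charvec ?S)) (bxor ?y (charvec ?S)) M'" if "M' \<in> ?Ms" for M'
    proof -
      have M': "M' \<in> Match' (bxor ?x ?y)" "M' \<in> Match' (\<lambda>j. ?d (Some j))"
        using that by (simp_all add: bxor_Some)
      have "?S = \<Union>{T\<in>M'. T \<subseteq> ?S}"
        using complete_matching_block_eq_Union[OF M'(2) even_d] that S by auto
      moreover have "disjoint M'"
        using Match'_partition_on[OF M'(1)] by (rule partition_onD2)
      ultimately show ?thesis
        using flip_invariant_Union[OF inv M'(1), of "{T\<in>M'. T \<subseteq> ?S}"] by simp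
    qed
    have "push_weights B ?z' ?w' M = (\<Sum>M'\<in>?Ms. B (bxor ?x (charvec ?S)) (bxor ?y (charvec ?S)) M')"
      unfolding push_weights_def using True parity
      by (simp only: bxor_bxor_cancel bxor_charvec_Some) simp
    also have "\<dots> = push_weights B z w M"
      unfolding push_weights_def using True flip_S by simp
    finally show ?thesis
      by simp
  qed
qed

lemma is_winding_push_weights:
  "is_winding Match' F B \<Longrightarrow> is_winding Match (F_oplus F) (push_weights B)"
  unfolding is_winding_def
  using push_weights_nonneg sum_push_weights flip_invariant_push_weights by blast

section \<open>Pulling a winding of F_oplus back to F\<close>

definition prepend :: "bool \<Rightarrow> ('j \<Rightarrow> bool) \<Rightarrow> 'j option \<Rightarrow> bool" where
  "prepend p x = case_option p x"

lemma prepend_simps [simp]: "prepend p x None = p" "prepend p x (Some j) = x j"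
  by (simp_all add: prepend_def)

definition lift_block :: "'j set \<Rightarrow> 'j option set" where
  "lift_block T = Some ` T \<union> {u. u = None \<and> card T = 1}"

lemma vimage_Some_lift_block [simp]: "Some -` lift_block T = T"
  by (auto simp: lift_block_def)

lemma lift_block_vimage_Some:
  fixes S :: "'j option set"
  assumes "card S = 2"
  shows "lift_block (Some -` S) = S"
proof -
  have "finite S"
    using assms by (metis card.infinite zero_neq_numeral)
  then have "card (Some -` S) = 1 \<longleftrightarrow> None \<in> S"
    using card_option_set[of S] assms by (cases "None \<in> S") auto
  then show ?thesis
    unfolding lift_block_def by (auto simp: image_iff)
qed

lemma prepend_bxor_charvec:
  "prepend p (bxor x (charvec T)) = bxor (prepend (p \<noteq> (card T = 1)) x) (charvec (lift_block T))"
  by (auto simp: bxor_def charvec_def lift_block_def prepend_def fun_eq_iff split: option.split)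

lemma sum_F_oplus_prepend: "(\<Sum>p\<in>UNIV. F_oplus F (prepend p x)) = F x"
  by (simp add: F_oplus_eq weight_option UNIV_bool)

lemma sum_UNIV_bool_shift: "(\<Sum>p\<in>UNIV. h (p \<noteq> c)) = (\<Sum>p\<in>UNIV. h p)" for c :: bool
  by (cases c) (simp_all add: UNIV_bool add.commute)

lemma Match_vimage_Some:
  fixes D :: "'j::finite option \<Rightarrow> bool"
  assumes M: "M \<in> Match D"
  shows "(\<lambda>S. Some -` S) ` M \<in> Match' (\<lambda>j. D (Some j))"
proof -
  have cards: "card (Some -` S) = 1 \<or> card (Some -` S) = 2" if "S \<in> M" for S
  proof -
    have "card S = 2"
      using M that by (simp add: Match_def)
    moreover have "finite S"
      by simp
    ultimately show ?thesis
      using card_option_set[of S] by (cases "None \<in> S") auto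
  qed
  have "partition_on (Some -` {u. D u}) ((-`) Some ` M - {{}})"
    using M by (intro partition_on_vimage) (simp add: Match_def)
  moreover have "(-`) Some ` M - {{}} = (\<lambda>S. Some -` S) ` M"
    using cards by force
  ultimately show ?thesis
    using cards by (auto simp: Match'_def vimage_def)
qed

lemma bij_betw_lift_matching:
  fixes D :: "'j::finite option \<Rightarrow> bool"
  shows "bij_betw ((`) lift_block) {N\<in>Match' (\<lambda>j. D (Some j)). lift_block ` N \<in> Match D} (Match D)"
proof (rule bij_betw_byWitness[where f' = "(`) (\<lambda>S. Some -` S)"])
  have lift_vimage: "lift_block ` (\<lambda>S. Some -` S) ` M = M" if "M \<in> Match D" for M
    using that lift_block_vimage_Some by (auto simp: Match_def image_image)
  then show "\<forall>M\<in>Match D. lift_block ` (\<lambda>S. Some -` S) ` M = M"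
    by blast
  show "(`) (\<lambda>S. Some -` S) ` Match D \<subseteq> {N\<in>Match' (\<lambda>j. D (Some j)). lift_block ` N \<in> Match D}"
    using lift_vimage Match_vimage_Some by auto
qed (auto simp: image_image)

definition pulled_weight :: "(('j option \<Rightarrow> bool) \<Rightarrow> ('j option \<Rightarrow> bool) \<Rightarrow> 'j option set set \<Rightarrow> rat) \<Rightarrow>
    ('j option \<Rightarrow> bool) \<Rightarrow> ('j option \<Rightarrow> bool) \<Rightarrow> 'j set set \<Rightarrow> rat" where
  "pulled_weight B z w N = (if lift_block ` N \<in> Match (bxor z w) then B z w (lift_block ` N) else 0)"

definition pull_weights :: "(('j option \<Rightarrow> bool) \<Rightarrow> ('j option \<Rightarrow> bool) \<Rightarrow> 'j option set set \<Rightarrow> rat) \<Rightarrow>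
    ('j \<Rightarrow> bool) \<Rightarrow> ('j \<Rightarrow> bool) \<Rightarrow> 'j set set \<Rightarrow> rat" where
  "pull_weights B x y N = (\<Sum>p\<in>UNIV. \<Sum>q\<in>UNIV. pulled_weight B (prepend p x) (prepend q y) N)"

lemma pull_weights_nonneg:
  assumes "\<forall>z w. \<forall>M\<in>Match (bxor z w). B z w M \<ge> 0"
  shows "pull_weights B x y N \<ge> 0"
  using assms unfolding pull_weights_def pulled_weight_def by (auto intro!: sum_nonneg)

lemma sum_pulled_weight:
  fixes x y :: "'j::finite \<Rightarrow> bool"
  shows "(\<Sum>N\<in>Match' (bxor x y). pulled_weight B (prepend p x) (prepend q y) N)
     = (\<Sum>M\<in>Match (bxor (prepend p x) (prepend q y)). B (prepend p x) (prepend q y) M)"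
proof -
  let ?z = "prepend p x" and ?w = "prepend q y"
  have restrict: "(\<lambda>j. bxor ?z ?w (Some j)) = bxor x y"
    by (simp add: bxor_def)
  have "(\<Sum>N\<in>Match' (bxor x y). pulled_weight B ?z ?w N)
      = (\<Sum>N\<in>{N\<in>Match' (bxor x y). lift_block ` N \<in> Match (bxor ?z ?w)}. B ?z ?w (lift_block ` N))"
    unfolding pulled_weight_def by (rule sum.inter_filter[symmetric]) simp
  also have "\<dots> = (\<Sum>M\<in>Match (bxor ?z ?w). B ?z ?w M)"
    using bij_betw_lift_matching[of "bxor ?z ?w", unfolded restrict] by (rule sum.reindex_bij_betw)
  finally show ?thesis .
qed

lemma sum_pull_weights:
  assumes "\<forall>z w. F_oplus F z * F_oplus F w = (\<Sum>M\<in>Match (bxor z w). B z w M)"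
  shows "F x * F y = (\<Sum>N\<in>Match' (bxor x y). pull_weights B x y N)"
proof -
  have "(\<Sum>N\<in>Match' (bxor x y). pull_weights B x y N)
      = (\<Sum>p\<in>UNIV. \<Sum>q\<in>UNIV. \<Sum>N\<in>Match' (bxor x y). pulled_weight B (prepend p x) (prepend q y) N)"
    unfolding pull_weights_def by (simp add: sum.swap[of _ "Match' (bxor x y)"])
  also have "\<dots> = (\<Sum>p\<in>UNIV. \<Sum>q\<in>UNIV. F_oplus F (prepend p x) * F_oplus F (prepend q y))"
    using assms by (simp add: sum_pulled_weight)
  also have "\<dots> = (\<Sum>p\<in>UNIV. F_oplus F (prepend p x)) * (\<Sum>q\<in>UNIV. F_oplus F (prepend q y))"
    by (simp add: sum_product)
  finally show ?thesis
    by (simp add: sum_F_oplus_prepend)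
qed

lemma pulled_weight_flip:
  assumes inv: "flip_invariant Match B" and "T \<in> N"
  shows "pulled_weight B (bxor z (charvec (lift_block T))) (bxor w (charvec (lift_block T))) N
       = pulled_weight B z w N"
proof (cases "lift_block ` N \<in> Match (bxor z w)")
  case True
  moreover have "lift_block T \<in> lift_block ` N"
    using \<open>T \<in> N\<close> by simp
  ultimately have "B z w (lift_block ` N)
      = B (bxor z (charvec (lift_block T))) (bxor w (charvec (lift_block T))) (lift_block ` N)"
    using inv unfolding flip_invariant_def by blast
  then show ?thesis
    using True unfolding pulled_weight_def by (simp add: bxor_bxor_cancel)
next
  case False
  then show ?thesis
    unfolding pulled_weight_def by (simp add: bxor_bxor_cancel)
qed

lemma flip_invariant_pull_weights:
  assumes inv: "flip_invariant Match B"
  shows "flip_invariant Match' (pull_weights B)"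
  unfolding flip_invariant_def
proof (intro allI ballI)
  fix x y :: "'a \<Rightarrow> bool" and N and T :: "'a set"
  assume "T \<in> N"
  let ?c = "card T = 1" and ?g = "\<lambda>p q. pulled_weight B (prepend p x) (prepend q y) N"
  have "pull_weights B (bxor x (charvec T)) (bxor y (charvec T)) N = (\<Sum>p\<in>UNIV. \<Sum>q\<in>UNIV. ?g (p \<noteq> ?c) (q \<noteq> ?c))"
    unfolding pull_weights_def prepend_bxor_charvec pulled_weight_flip[OF inv \<open>T \<in> N\<close>] ..
  also have "\<dots> = (\<Sum>p\<in>UNIV. \<Sum>q\<in>UNIV. ?g (p \<noteq> ?c) q)"
    by (rule sum.cong[OF refl]) (rule sum_UNIV_bool_shift)
  also have "\<dots> = (\<Sum>p\<in>UNIV. \<Sum>q\<in>UNIV. ?g p q)"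
    by (rule sum_UNIV_bool_shift[where h = "\<lambda>p. \<Sum>q\<in>UNIV. ?g p q"])
  finally show "pull_weights B x y N = pull_weights B (bxor x (charvec T)) (bxor y (charvec T)) N"
    unfolding pull_weights_def by simp
qed

lemma is_winding_pull_weights:
  "is_winding Match (F_oplus F) B \<Longrightarrow> is_winding Match' F (pull_weights B)"
  unfolding is_winding_def
  using pull_weights_nonneg sum_pull_weights flip_invariant_pull_weights by blast

theorem lemma8:
  fixes F :: "('j::finite \<Rightarrow> bool) \<Rightarrow> rat"
  assumes "\<forall>x. F x \<ge> 0"
  shows "windable F \<longleftrightarrow> even_windable (F_oplus F)"
  unfolding windable_def even_windable_def winding_wrt_iff_is_winding
  using is_winding_push_weights is_winding_pull_weights by blast

end
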